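(* Let $\langle A;\cdot\rangle$ be a semigroup satisfying condition $( * )$. Then $\langle A;\cdot\rangle$ is an Abelian algebra if and only if $\langle A;\cdot\rangle$ is an inflation of a subsemigroup which is semisimple and is an Abelian algebra.
   Context: $A\cdot A=\{xy\mid x,y\in A\}$. Condition $( * )$: either ($bcA=bA$ and $Abc=Ac$ for all $b,c\in A$), or the set $A\cdot A$ is finite. A semigroup is semisimple if each of its principal factors is simple or $0$-simple. A semigroup $\langle A;\cdot\rangle$ is an inflation of a subsemigroup $\langle B;\cdot\rangle$ if there is a partition $\{X_b\mid b\in B\}$ of $A$ with $b\in X_b$ and $x\cdot y=a\cdot b$ for all $a,b\in B$, $x\in X_a$, $y\in X_b$. A polynomial operation of an algebra is an operation obtained from a term by substituting elements of the algebra for some of its variables. An algebra is called Abelian if for every polynomial operation $t(x,y_1,\ldots,y_n)$ and all elements $u,v,c_1,\ldots,c_n,d_1,\ldots,d_n$ of the algebra, $t(u,c_1,\ldots,c_n)=t(u,d_1,\ldots,d_n)$ implies $t(v,c_1,\ldots,c_n)=t(v,d_1,\ldots,d_n)$. *)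

theory Defs
  imports Main
begin

definition semigroup_on :: "'a set \<Rightarrow> ('a \<Rightarrow> 'a \<Rightarrow> 'a) \<Rightarrow> bool" where
  "semigroup_on A f \<longleftrightarrow> (\<forall>x\<in>A. \<forall>y\<in>A. f x y \<in> A) \<and>
     (\<forall>x\<in>A. \<forall>y\<in>A. \<forall>z\<in>A. f (f x y) z = f x (f y z))"

definition prod_set :: "'a set \<Rightarrow> ('a \<Rightarrow> 'a \<Rightarrow> 'a) \<Rightarrow> 'a set" where
  "prod_set A f = {f x y | x y. x \<in> A \<and> y \<in> A}"

definition cond_star :: "'a set \<Rightarrow> ('a \<Rightarrow> 'a \<Rightarrow> 'a) \<Rightarrow> bool" where
  "cond_star A f \<longleftrightarrow>
     (\<forall>b\<in>A. \<forall>c\<in>A. {f (f b c) x | x. x \<in> A} = {f b x | x. x \<in> A} \<and>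
                    {f x (f b c) | x. x \<in> A} = {f x c | x. x \<in> A})
     \<or> finite (prod_set A f)"

definition ideal_on :: "'a set \<Rightarrow> ('a \<Rightarrow> 'a \<Rightarrow> 'a) \<Rightarrow> 'a set \<Rightarrow> bool" where
  "ideal_on A f I \<longleftrightarrow> I \<noteq> {} \<and> I \<subseteq> A \<and> (\<forall>x\<in>I. \<forall>y\<in>A. f x y \<in> I \<and> f y x \<in> I)"

definition simple_sg :: "'a set \<Rightarrow> ('a \<Rightarrow> 'a \<Rightarrow> 'a) \<Rightarrow> bool" where
  "simple_sg A f \<longleftrightarrow> semigroup_on A f \<and> A \<noteq> {} \<and> (\<forall>I. ideal_on A f I \<longrightarrow> I = A)"

definition zero_simple_sg :: "'a set \<Rightarrow> ('a \<Rightarrow> 'a \<Rightarrow> 'a) \<Rightarrow> bool" where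
  "zero_simple_sg A f \<longleftrightarrow> semigroup_on A f \<and>
     (\<exists>z\<in>A. (\<forall>x\<in>A. f z x = z \<and> f x z = z) \<and> prod_set A f \<noteq> {z} \<and>
        (\<forall>I. ideal_on A f I \<longrightarrow> I = {z} \<or> I = A))"

text \<open>Principal ideal J(a) = A^1 a A^1 and I(a) = {b in J(a). J(b) properly contained in J(a)}.\<close>
definition pideal :: "'a set \<Rightarrow> ('a \<Rightarrow> 'a \<Rightarrow> 'a) \<Rightarrow> 'a \<Rightarrow> 'a set" where
  "pideal A f a = {a} \<union> {f a x | x. x \<in> A} \<union> {f x a | x. x \<in> A}
                  \<union> {f (f x a) y | x y. x \<in> A \<and> y \<in> A}"

definition pideal_below :: "'a set \<Rightarrow> ('a \<Rightarrow> 'a \<Rightarrow> 'a) \<Rightarrow> 'a \<Rightarrow> 'a set" where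
  "pideal_below A f a = {b \<in> pideal A f a. pideal A f b \<subset> pideal A f a}"

text \<open>The principal factor J(a)/I(a) (Rees quotient), realised on 'a option with None as the
  zero; if I(a) is empty the principal factor is J(a) itself.\<close>
definition pfactor_carrier :: "'a set \<Rightarrow> ('a \<Rightarrow> 'a \<Rightarrow> 'a) \<Rightarrow> 'a \<Rightarrow> 'a option set" where
  "pfactor_carrier A f a =
     (if pideal_below A f a = {} then Some ` pideal A f a
      else insert None (Some ` (pideal A f a - pideal_below A f a)))"

fun pfactor_op :: "'a set \<Rightarrow> ('a \<Rightarrow> 'a \<Rightarrow> 'a) \<Rightarrow> 'a \<Rightarrow> 'a option \<Rightarrow> 'a option \<Rightarrow> 'a option" where
  "pfactor_op A f a (Some x) (Some y) =
     (if f x y \<in> pideal A f a - pideal_below A f a then Some (f x y) else None)"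
| "pfactor_op A f a _ _ = None"

definition semisimple :: "'a set \<Rightarrow> ('a \<Rightarrow> 'a \<Rightarrow> 'a) \<Rightarrow> bool" where
  "semisimple A f \<longleftrightarrow> (\<forall>a\<in>A. simple_sg (pfactor_carrier A f a) (pfactor_op A f a) \<or>
                                zero_simple_sg (pfactor_carrier A f a) (pfactor_op A f a))"

definition inflation_of :: "'a set \<Rightarrow> ('a \<Rightarrow> 'a \<Rightarrow> 'a) \<Rightarrow> 'a set \<Rightarrow> bool" where
  "inflation_of A f B \<longleftrightarrow> B \<subseteq> A \<and> semigroup_on B f \<and>
     (\<exists>X :: 'a \<Rightarrow> 'a set.
        (\<forall>b\<in>B. b \<in> X b \<and> X b \<subseteq> A) \<and>
        (\<forall>x\<in>A. \<exists>!b. b \<in> B \<and> x \<in> X b) \<and>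
        (\<forall>a\<in>B. \<forall>b\<in>B. \<forall>x\<in>X a. \<forall>y\<in>X b. f x y = f a b))"

text \<open>Terms of the semigroup language with constants (polynomials).\<close>
datatype 'a pterm = PVar nat | PConst 'a | PMul "'a pterm" "'a pterm"

fun pconsts :: "'a pterm \<Rightarrow> 'a set" where
  "pconsts (PVar i) = {}"
| "pconsts (PConst c) = {c}"
| "pconsts (PMul s t) = pconsts s \<union> pconsts t"

fun peval :: "('a \<Rightarrow> 'a \<Rightarrow> 'a) \<Rightarrow> (nat \<Rightarrow> 'a) \<Rightarrow> 'a pterm \<Rightarrow> 'a" where
  "peval f env (PVar i) = env i"
| "peval f env (PConst c) = c"
| "peval f env (PMul s t) = f (peval f env s) (peval f env t)"

text \<open>Abelian algebra: variable 0 plays the role of x, variables 1,2,... the y_i.\<close>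
definition abelian_alg :: "'a set \<Rightarrow> ('a \<Rightarrow> 'a \<Rightarrow> 'a) \<Rightarrow> bool" where
  "abelian_alg A f \<longleftrightarrow>
     (\<forall>t u v c d. pconsts t \<subseteq> A \<longrightarrow> u \<in> A \<longrightarrow> v \<in> A \<longrightarrow> range c \<subseteq> A \<longrightarrow> range d \<subseteq> A \<longrightarrow>
        peval f (c(0 := u)) t = peval f (d(0 := u)) t \<longrightarrow>
        peval f (c(0 := v)) t = peval f (d(0 := v)) t)"

end

theory Submission
  imports Defs
begin

text \<open>Let \<open>A\<close> be abelian. The key observation is that \<open>bA \<subseteq> bsA\<close> for all \<open>b, s \<in> A\<close>.
  Under the first alternative of (*) this is immediate; if \<open>A\<cdot>A\<close> is finite, \<open>s\<close> has an
  idempotent power \<open>e \<in> sA\<close>, and abelianness applied to \<open>(be)e = be\<close> gives \<open>(be)c = bc\<close>.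
  Hence every element of \<open>A\<cdot>A\<close> generates \<open>A\<cdot>A\<close> as an ideal, so \<open>A\<cdot>A\<close> is simple. Moreover
  \<open>xx = xxw\<close> for some \<open>w\<close>, and abelianness makes \<open>e = ww\<close> idempotent with \<open>xe\<close> acting on \<open>A\<close>
  from both sides exactly as \<open>x\<close>; collecting the elements that act like a given \<open>k \<in> A\<cdot>A\<close>
  exhibits \<open>A\<close> as an inflation of \<open>A\<cdot>A\<close>.

  Conversely, the multiplication of an inflation of \<open>B\<close> factors through the retraction onto
  \<open>B\<close>, so every polynomial that is not a projection takes the same values on \<open>A\<close> as a
  polynomial over \<open>B\<close>, and abelianness of \<open>B\<close> transfers to \<open>A\<close>.\<close>

lemma semigroup_on_closed: "semigroup_on A f \<Longrightarrow> x \<in> A \<Longrightarrow> y \<in> A \<Longrightarrow> f x y \<in> A"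
  unfolding semigroup_on_def by blast

lemma semigroup_on_assoc:
  "semigroup_on A f \<Longrightarrow> x \<in> A \<Longrightarrow> y \<in> A \<Longrightarrow> z \<in> A \<Longrightarrow> f (f x y) z = f x (f y z)"
  unfolding semigroup_on_def by blast

lemma prod_setI: "x \<in> A \<Longrightarrow> y \<in> A \<Longrightarrow> f x y \<in> prod_set A f"
  unfolding prod_set_def by blast

lemma prod_set_subset: "semigroup_on A f \<Longrightarrow> prod_set A f \<subseteq> A"
  unfolding prod_set_def semigroup_on_def by blast

lemma semigroup_on_prod_set: "semigroup_on A f \<Longrightarrow> semigroup_on (prod_set A f) f"
  unfolding semigroup_on_def prod_set_def by blast

lemma abelian_algD:
  "abelian_alg A f \<Longrightarrow> pconsts t \<subseteq> A \<Longrightarrow> u \<in> A \<Longrightarrow> v \<in> A \<Longrightarrow> range c \<subseteq> A \<Longrightarrow>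
   range d \<subseteq> A \<Longrightarrow> peval f (c(0 := u)) t = peval f (d(0 := u)) t \<Longrightarrow>
   peval f (c(0 := v)) t = peval f (d(0 := v)) t"
  unfolding abelian_alg_def by blast

lemma abelian_alg_subset:
  assumes ab: "abelian_alg A f" and BA: "B \<subseteq> A"
  shows "abelian_alg B f"
  unfolding abelian_alg_def
proof (intro allI impI)
  fix t u v and c d :: "nat \<Rightarrow> 'a"
  assume "pconsts t \<subseteq> B" "u \<in> B" "v \<in> B" "range c \<subseteq> B" "range d \<subseteq> B"
    and eq: "peval f (c(0 := u)) t = peval f (d(0 := u)) t"
  with BA have "pconsts t \<subseteq> A" "u \<in> A" "v \<in> A" "range c \<subseteq> A" "range d \<subseteq> A"
    by auto
  from this eq show "peval f (c(0 := v)) t = peval f (d(0 := v)) t"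
    by (rule abelian_algD[OF ab])
qed

lemma abelian_alg_eq_mult_right:
  assumes "abelian_alg A f" "c \<in> A" "d \<in> A" "u \<in> A" "v \<in> A" and "f c u = f d u"
  shows "f c v = f d v"
  using abelian_algD[OF assms(1), of "PMul (PVar 1) (PVar 0)" u v "\<lambda>_. c" "\<lambda>_. d"] assms(2-)
  by auto

lemma abelian_alg_eq_mult_left:
  assumes "abelian_alg A f" "c \<in> A" "d \<in> A" "u \<in> A" "v \<in> A" and "f u c = f u d"
  shows "f v c = f v d"
  using abelian_algD[OF assms(1), of "PMul (PVar 0) (PVar 1)" u v "\<lambda>_. c" "\<lambda>_. d"] assms(2-)
  by auto

lemma abelian_alg_mult_idem:
  assumes "abelian_alg A f" "semigroup_on A f" "x \<in> A" "e \<in> A" "f e e = e" "v \<in> A"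
  shows "f (f x e) v = f x v"
proof -
  have "f (f x e) e = f x e"
    using semigroup_on_assoc[OF assms(2) \<open>x \<in> A\<close> \<open>e \<in> A\<close> \<open>e \<in> A\<close>] \<open>f e e = e\<close> by simp
  then show ?thesis
    using abelian_alg_eq_mult_right[OF assms(1) _ \<open>x \<in> A\<close> \<open>e \<in> A\<close> \<open>v \<in> A\<close>]
      semigroup_on_closed[OF assms(2-4)] by blast
qed

subsection \<open>Idempotent powers\<close>

text \<open>\<open>spow f x n\<close> is \<open>x\<^sup>n\<^sup>+\<^sup>1\<close>, so that no unit is needed.\<close>
fun spow :: "('a \<Rightarrow> 'a \<Rightarrow> 'a) \<Rightarrow> 'a \<Rightarrow> nat \<Rightarrow> 'a" where
  "spow f x 0 = x"
| "spow f x (Suc n) = f (spow f x n) x"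

lemma spow_in: "semigroup_on A f \<Longrightarrow> x \<in> A \<Longrightarrow> spow f x n \<in> A"
  by (induction n) (auto intro: semigroup_on_closed)

lemma spow_add:
  "semigroup_on A f \<Longrightarrow> x \<in> A \<Longrightarrow> f (spow f x m) (spow f x n) = spow f x (m + n + 1)"
proof (induction n)
  case (Suc n)
  then show ?case
    using semigroup_on_assoc[OF Suc.prems(1) spow_in[OF Suc.prems, of m]
        spow_in[OF Suc.prems, of n] \<open>x \<in> A\<close>] by simp
qed simp

lemma spow_periodic:
  assumes sg: "semigroup_on A f" and x: "x \<in> A" and eq: "spow f x a = spow f x (a + p)"
  shows "spow f x (a + t + q * p) = spow f x (a + t)"
proof (induction q)
  case (Suc q)
  have shift: "spow f x (a + s + p) = spow f x (a + s)" for s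
  proof (cases s)
    case (Suc s')
    have "spow f x (a + s + p) = f (spow f x (a + p)) (spow f x s')"
      using spow_add[OF sg x, of "a + p" s'] Suc by (simp add: ac_simps)
    also have "\<dots> = spow f x (a + s)"
      using spow_add[OF sg x, of a s'] Suc eq by simp
    finally show ?thesis .
  qed (use eq in simp)
  show ?case
    using shift[of "t + q * p"] Suc by (simp add: algebra_simps)
qed simp

lemma finite_prod_set_idempotent_power:
  assumes sg: "semigroup_on A f" and fin: "finite (prod_set A f)" and x: "x \<in> A"
  shows "\<exists>n. f (spow f x n) (spow f x n) = spow f x n"
proof -
  have "range (\<lambda>n. spow f x (Suc n)) \<subseteq> prod_set A f"
    using spow_in[OF sg x] x by (auto intro: prod_setI)
  then have "finite (range (\<lambda>n. spow f x (Suc n)))"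
    using fin finite_subset by blast
  then have "\<not> inj (\<lambda>n. spow f x (Suc n))"
    using finite_imageD infinite_UNIV_nat by blast
  then obtain i j where "i \<noteq> j" "spow f x (Suc i) = spow f x (Suc j)"
    unfolding inj_def by blast
  then obtain i j where "i < j" "spow f x (Suc i) = spow f x (Suc j)"
    by (metis linorder_neq_iff)
  define a where "a = Suc i"
  define p where "p = j - i"
  have p: "p > 0" and eq: "spow f x a = spow f x (a + p)"
    using \<open>i < j\<close> \<open>spow f x (Suc i) = spow f x (Suc j)\<close> unfolding a_def p_def by simp_all
  define n where "n = (a + 1) * p - 1"
  have n1: "n + 1 = (a + 1) * p" and na: "a \<le> n"
    using p mult_le_mono2[of 1 p "a + 1"] unfolding n_def by auto
  have idx: "n + n + 1 = a + (n - a) + (a + 1) * p"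
    using n1 na by linarith
  have "f (spow f x n) (spow f x n) = spow f x (a + (n - a) + (a + 1) * p)"
    unfolding idx[symmetric] by (rule spow_add[OF sg x])
  also have "\<dots> = spow f x (a + (n - a))"
    by (rule spow_periodic[OF sg x eq])
  also have "\<dots> = spow f x n"
    using na by simp
  finally show ?thesis by blast
qed

lemma semisimple_if_pideal_eq_carrier:
  assumes sg: "semigroup_on B f" and full: "\<forall>a\<in>B. pideal B f a = B"
  shows "semisimple B f"
  unfolding semisimple_def
proof (intro ballI disjI1)
  fix a assume a: "a \<in> B"
  have "pideal_below B f a = {}"
    unfolding pideal_below_def using full a by auto
  then have car: "pfactor_carrier B f a = Some ` B"
    and op: "\<And>x y. x \<in> B \<Longrightarrow> y \<in> B \<Longrightarrow> pfactor_op B f a (Some x) (Some y) = Some (f x y)"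
    unfolding pfactor_carrier_def using full a semigroup_on_closed[OF sg] by auto
  show "simple_sg (pfactor_carrier B f a) (pfactor_op B f a)"
    unfolding simple_sg_def car
  proof (intro conjI allI impI)
    show "semigroup_on (Some ` B) (pfactor_op B f a)"
      using sg unfolding semigroup_on_def by (auto simp del: pfactor_op.simps simp add: op)
    show "Some ` B \<noteq> {}"
      using a by blast
    fix I assume I: "ideal_on (Some ` B) (pfactor_op B f a) I"
    then obtain i where i: "i \<in> B" "Some i \<in> I"
      unfolding ideal_on_def by blast
    have mult_right: "Some (f x y) \<in> I" and mult_left: "Some (f y x) \<in> I"
      if "Some x \<in> I" "y \<in> B" for x y
    proof -
      have x: "x \<in> B"
        using I that(1) unfolding ideal_on_def by blast
      have "pfactor_op B f a (Some x) (Some y) \<in> I \<and> pfactor_op B f a (Some y) (Some x) \<in> I"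
        using I that unfolding ideal_on_def by blast
      then show "Some (f x y) \<in> I" "Some (f y x) \<in> I"
        unfolding op[OF x that(2)] op[OF that(2) x] by auto
    qed
    have "Some t \<in> I" if "t \<in> pideal B f i" for t
      using that i mult_right mult_left unfolding pideal_def by blast
    then show "I = Some ` B"
      using I full i(1) unfolding ideal_on_def by blast
  qed
qed

subsection \<open>Inflations\<close>

lemma inflation_ofI:
  assumes BA: "B \<subseteq> A" and sgB: "semigroup_on B f"
    and rep: "\<forall>x\<in>A. \<exists>k\<in>B. \<forall>v\<in>A. f k v = f x v \<and> f v k = f v x"
  shows "inflation_of A f B"
proof -
  define represents where "represents x k \<longleftrightarrow> k \<in> B \<and> (\<forall>v\<in>A. f k v = f x v \<and> f v k = f v x)"
    for x k
  define r where "r x = (if x \<in> B then x else (SOME k. represents x k))" for x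
  have r: "represents x (r x)" if "x \<in> A" for x
  proof (cases "x \<in> B")
    case False
    then show ?thesis
      using rep that someI_ex[of "represents x"] unfolding r_def represents_def by auto
  qed (simp add: r_def represents_def)
  define X where "X b = {x \<in> A. r x = b}" for b
  show ?thesis
    unfolding inflation_of_def
  proof (intro conjI exI[of _ X] ballI)
    show "b \<in> X b" "X b \<subseteq> A" if "b \<in> B" for b
      using that BA unfolding X_def r_def by auto
    show "\<exists>!b. b \<in> B \<and> x \<in> X b" if "x \<in> A" for x
      using r[OF that] that unfolding X_def represents_def by auto
    show "f x y = f a b" if "a \<in> B" "b \<in> B" "x \<in> X a" "y \<in> X b" for a b x y
    proof -
      have x: "x \<in> A" "represents x a" and y: "y \<in> A" "represents y b"
        using that r unfolding X_def by auto
      then show ?thesis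
        using BA \<open>b \<in> B\<close> unfolding represents_def by auto
    qed
  qed (use BA sgB in auto)
qed

lemma pconsts_map_pterm: "pconsts (map_pterm g t) = g ` pconsts t"
  by (induction t) auto

locale mult_retraction =
  fixes A B :: "'a set" and f :: "'a \<Rightarrow> 'a \<Rightarrow> 'a" and g :: "'a \<Rightarrow> 'a"
  assumes subset: "B \<subseteq> A"
    and maps_to: "\<And>x. x \<in> A \<Longrightarrow> g x \<in> B"
    and retract: "\<And>b. b \<in> B \<Longrightarrow> g b = b"
    and mult_factors: "\<And>x y. x \<in> A \<Longrightarrow> y \<in> A \<Longrightarrow> f x y = f (g x) (g y)"
    and closed: "\<And>x y. x \<in> B \<Longrightarrow> y \<in> B \<Longrightarrow> f x y \<in> B"
begin

lemma mult_in: "x \<in> A \<Longrightarrow> y \<in> A \<Longrightarrow> f x y \<in> B"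
  using mult_factors maps_to closed by simp

lemma peval_in: "pconsts t \<subseteq> A \<Longrightarrow> range env \<subseteq> A \<Longrightarrow> peval f env t \<in> A"
  by (induction t) (use mult_in subset in auto)

lemma peval_map_pterm:
  "pconsts t \<subseteq> A \<Longrightarrow> range env \<subseteq> A \<Longrightarrow>
   peval f (g \<circ> env) (map_pterm g t) = g (peval f env t)"
proof (induction t)
  case (PMul s r)
  have "peval f env s \<in> A" "peval f env r \<in> A"
    using PMul.prems peval_in by auto
  then show ?case
    using PMul retract[OF mult_in] mult_factors by simp
qed simp_all

lemma peval_eq_peval_map_pterm:
  assumes "pconsts t \<subseteq> A" "range env \<subseteq> A" "t = PMul s r"
  shows "peval f env t = peval f (g \<circ> env) (map_pterm g t)"
proof -
  have "peval f env t \<in> B"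
    using assms peval_in[of s env] peval_in[of r env] mult_in by auto
  then show ?thesis
    using peval_map_pterm[OF assms(1,2)] retract by simp
qed

lemma abelian_alg_retract:
  assumes ab: "abelian_alg B f"
  shows "abelian_alg A f"
  unfolding abelian_alg_def
proof (intro allI impI)
  fix t u v and c d :: "nat \<Rightarrow> 'a"
  assume t: "pconsts t \<subseteq> A" and u: "u \<in> A" and v: "v \<in> A" and c: "range c \<subseteq> A"
    and d: "range d \<subseteq> A" and eq: "peval f (c(0 := u)) t = peval f (d(0 := u)) t"
  show "peval f (c(0 := v)) t = peval f (d(0 := v)) t"
  proof (cases t)
    case (PVar i)
    then show ?thesis
      using eq by (cases "i = 0") auto
  next
    case (PMul s r)
    have upd: "range (e(0 := w)) \<subseteq> A" "g \<circ> e(0 := w) = (g \<circ> e)(0 := g w)"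
      if "range e \<subseteq> A" "w \<in> A" for e w
      using that by auto
    have to_B: "peval f (e(0 := w)) t = peval f ((g \<circ> e)(0 := g w)) (map_pterm g t)"
      if "range e \<subseteq> A" "w \<in> A" for e w
      using peval_eq_peval_map_pterm[OF t upd(1)[OF that] PMul] upd(2)[OF that] by simp
    have in_B: "pconsts (map_pterm g t) \<subseteq> B" "range (g \<circ> c) \<subseteq> B" "range (g \<circ> d) \<subseteq> B"
      using t c d maps_to by (auto simp: pconsts_map_pterm)
    from eq have "peval f ((g \<circ> c)(0 := g u)) (map_pterm g t) =
        peval f ((g \<circ> d)(0 := g u)) (map_pterm g t)"
      unfolding to_B[OF c u] to_B[OF d u] .
    then have "peval f ((g \<circ> c)(0 := g v)) (map_pterm g t) =
        peval f ((g \<circ> d)(0 := g v)) (map_pterm g t)"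
      by (rule abelian_algD[OF ab in_B(1) maps_to[OF u] maps_to[OF v] in_B(2,3)])
    then show ?thesis
      unfolding to_B[OF c v] to_B[OF d v] .
  qed simp
qed

end

lemma inflation_of_abelian_alg:
  assumes infl: "inflation_of A f B" and ab: "abelian_alg B f"
  shows "abelian_alg A f"
proof -
  obtain X where BA: "B \<subseteq> A" and sgB: "semigroup_on B f"
    and X_block: "\<forall>b\<in>B. b \<in> X b \<and> X b \<subseteq> A"
    and X_part: "\<forall>x\<in>A. \<exists>!b. b \<in> B \<and> x \<in> X b"
    and X_mult: "\<forall>a\<in>B. \<forall>b\<in>B. \<forall>x\<in>X a. \<forall>y\<in>X b. f x y = f a b"
    using infl unfolding inflation_of_def by blast
  define g where "g x = (THE b. b \<in> B \<and> x \<in> X b)" for x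
  have g: "g x \<in> B \<and> x \<in> X (g x)" if "x \<in> A" for x
    unfolding g_def using theI'[OF X_part[rule_format, OF that]] .
  interpret mult_retraction A B f g
  proof
    show "B \<subseteq> A" by (rule BA)
    show "g x \<in> B" if "x \<in> A" for x
      using g[OF that] ..
    show "g b = b" if "b \<in> B" for b
      unfolding g_def using that X_block by (intro the1_equality[OF X_part[rule_format]]) (use BA in auto)
    show "f x y = f (g x) (g y)" if "x \<in> A" "y \<in> A" for x y
      using X_mult[rule_format, of "g x" "g y" x y] g[OF that(1)] g[OF that(2)] by simp
    show "f x y \<in> B" if "x \<in> B" "y \<in> B" for x y
      using semigroup_on_closed[OF sgB that] .
  qed
  show ?thesis
    using abelian_alg_retract[OF ab] .
qed

subsection \<open>The subsemigroup \<open>A\<cdot>A\<close>\<close>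

lemma cond_star_mult_absorb:
  assumes ab: "abelian_alg A f" and sg: "semigroup_on A f" and cs: "cond_star A f"
    and b: "b \<in> A" and c: "c \<in> A" and s: "s \<in> A"
  shows "\<exists>y\<in>A. f b c = f (f b s) y"
proof (cases "finite (prod_set A f)")
  case True
  then obtain n where idem: "f (spow f s n) (spow f s n) = spow f s n"
    using finite_prod_set_idempotent_power[OF sg _ s] by blast
  define e where "e = spow f s n"
  define p where "p = spow f s (n + n)"
  have eA: "e \<in> A" and pA: "p \<in> A"
    unfolding e_def p_def using spow_in[OF sg s] by auto
  have "f s p = f (spow f s 0) (spow f s (n + n))"
    unfolding p_def by simp
  also have "\<dots> = f (spow f s n) (spow f s n)"
    unfolding spow_add[OF sg s] by simp
  finally have e_eq: "e = f s p"
    using idem unfolding e_def by simp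
  have "f b c = f (f b e) c"
    using abelian_alg_mult_idem[OF ab sg b eA _ c] idem unfolding e_def by simp
  also have "\<dots> = f (f (f b s) p) c"
    unfolding e_eq using semigroup_on_assoc[OF sg b s pA] by simp
  also have "\<dots> = f (f b s) (f p c)"
    using semigroup_on_assoc[OF sg semigroup_on_closed[OF sg b s] pA c] .
  finally show ?thesis
    using semigroup_on_closed[OF sg pA c] by blast
next
  case False
  with cs b s have "{f (f b s) x |x. x \<in> A} = {f b x |x. x \<in> A}"
    unfolding cond_star_def by blast
  moreover have "f b c \<in> {f b x |x. x \<in> A}"
    using c by blast
  ultimately show ?thesis by auto
qed

lemma pideal_prod_set:
  assumes ab: "abelian_alg A f" and sg: "semigroup_on A f" and cs: "cond_star A f"
    and s: "s \<in> prod_set A f"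
  shows "pideal (prod_set A f) f s = prod_set A f"
proof
  show "pideal (prod_set A f) f s \<subseteq> prod_set A f"
    unfolding pideal_def using s semigroup_on_closed[OF semigroup_on_prod_set[OF sg]] by auto
  show "prod_set A f \<subseteq> pideal (prod_set A f) f s"
  proof
    fix t assume "t \<in> prod_set A f"
    then obtain b c where b: "b \<in> A" and c: "c \<in> A" and t: "t = f b c"
      unfolding prod_set_def by blast
    obtain b' c' where b': "b' \<in> A" and c': "c' \<in> A" and s_eq: "s = f b' c'"
      using s unfolding prod_set_def by blast
    have sA: "s \<in> A" and bb': "f b b' \<in> A"
      using semigroup_on_closed[OF sg] b b' c' s_eq by auto
    obtain y where y: "y \<in> A" "f b c = f (f b s) y"
      using cond_star_mult_absorb[OF ab sg cs b c sA] by blast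
    obtain y' where y': "y' \<in> A" "f (f b b') c' = f (f (f b b') s) y'"
      using cond_star_mult_absorb[OF ab sg cs bb' c' sA] by blast
    have "t = f (f (f b b') c') y"
      using t y(2) s_eq semigroup_on_assoc[OF sg b b' c'] by simp
    also have "\<dots> = f (f (f b b') s) (f y' y)"
      unfolding y'(2) using semigroup_on_assoc[OF sg semigroup_on_closed[OF sg bb' sA] y'(1) y(1)] .
    finally show "t \<in> pideal (prod_set A f) f s"
      unfolding pideal_def using prod_setI[OF b b'] prod_setI[OF y'(1) y(1)] by blast
  qed
qed

lemma prod_set_mult_representative:
  assumes ab: "abelian_alg A f" and sg: "semigroup_on A f" and cs: "cond_star A f"
    and x: "x \<in> A"
  shows "\<exists>k\<in>prod_set A f. \<forall>v\<in>A. f k v = f x v \<and> f v k = f v x"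
proof -
  obtain w where w: "w \<in> A" and xxw: "f x x = f (f x x) w"
    using cond_star_mult_absorb[OF ab sg cs x x x] by blast
  have xx: "f x x \<in> A" and xw: "f x w \<in> A" and ww: "f w w \<in> A"
    using semigroup_on_closed[OF sg] x w by auto
  have right_xw: "f v x = f v (f x w)" if v: "v \<in> A" for v
  proof -
    have "f x x = f x (f x w)"
      using xxw semigroup_on_assoc[OF sg x x w] by simp
    then show ?thesis
      using abelian_alg_eq_mult_left[OF ab x xw x v] by blast
  qed
  have right_ww: "f v (f w w) = f v w" if v: "v \<in> A" for v
  proof -
    have "f (f x x) (f w w) = f (f (f x x) w) w"
      using semigroup_on_assoc[OF sg xx w w] by simp
    also have "\<dots> = f (f x x) w"
      using xxw by simp
    finally show ?thesis
      using abelian_alg_eq_mult_left[OF ab ww w xx v] by blast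
  qed
  define e where "e = f w w"
  have eA: "e \<in> A"
    unfolding e_def using ww .
  have idem: "f e e = e"
    unfolding e_def using right_ww[OF ww] right_ww[OF w] semigroup_on_assoc[OF sg w w w] by simp
  have "f v (f x e) = f v x" if v: "v \<in> A" for v
  proof -
    have "f v (f x e) = f (f v x) w"
      unfolding e_def using right_ww[OF semigroup_on_closed[OF sg v x]]
        semigroup_on_assoc[OF sg v x ww] by simp
    also have "\<dots> = f v x"
      using right_xw[OF v] semigroup_on_assoc[OF sg v x w] by simp
    finally show ?thesis .
  qed
  moreover have "f (f x e) v = f x v" if "v \<in> A" for v
    using abelian_alg_mult_idem[OF ab sg x eA idem that] .
  ultimately show ?thesis
    using prod_setI[OF x eA] by blast
qed

theorem mainTheorem17:
  fixes A :: "'a set" and f :: "'a \<Rightarrow> 'a \<Rightarrow> 'a"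
  assumes "semigroup_on A f" and "cond_star A f"
  shows "abelian_alg A f \<longleftrightarrow>
         (\<exists>B. inflation_of A f B \<and> semisimple B f \<and> abelian_alg B f)"
proof
  assume ab: "abelian_alg A f"
  note sg = assms(1) and cs = assms(2)
  have "inflation_of A f (prod_set A f)"
    using prod_set_mult_representative[OF ab sg cs]
    by (intro inflation_ofI prod_set_subset semigroup_on_prod_set sg) blast
  moreover have "semisimple (prod_set A f) f"
    using pideal_prod_set[OF ab sg cs]
    by (intro semisimple_if_pideal_eq_carrier semigroup_on_prod_set sg) blast
  moreover have "abelian_alg (prod_set A f) f"
    using abelian_alg_subset[OF ab prod_set_subset[OF sg]] .
  ultimately show "\<exists>B. inflation_of A f B \<and> semisimple B f \<and> abelian_alg B f"
    by blast
next
  assume "\<exists>B. inflation_of A f B \<and> semisimple B f \<and> abelian_alg B f"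
  then show "abelian_alg A f"
    using inflation_of_abelian_alg by blast
qed

end
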